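(* Fix $n\ge2$. Let $p:S^n\to\mathbb{RP}^n$ be the standard double cover and $q:\mathbb R\to S^1$, $q(\theta)=e^{i\theta}$. Then the product covering $p\times q:S^n\times\mathbb R\to\mathbb{RP}^n\times S^1$ is not equivalent (as a covering over $\mathbb{RP}^n\times S^1$) to any Weierstrass entire covering.
   Context: For a topological space $X$, a Weierstrass entire family is a continuous map $F:X\times\mathbb C\to\mathbb C$ such that for each $x\in X$, $z\mapsto F(x,z)$ is entire, and such that the zero locus $Z(F)=\{(x,z):F(x,z)=0\}$ with the first projection $p_1:Z(F)\to X$ is a countably infinite-sheeted covering. This covering is the Weierstrass entire covering associated to $F$. *)

theory Defs
  imports "HOL-Analysis.Analysis" "HOL-Complex_Analysis.Complex_Analysis"
begin

definition covering_map_top :: "'e topology \<Rightarrow> 'x topology \<Rightarrow> ('e \<Rightarrow> 'x) \<Rightarrow> bool" where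
  "covering_map_top E X p \<longleftrightarrow>
     continuous_map E X p \<and> p ` topspace E = topspace X \<and>
     (\<forall>x \<in> topspace X. \<exists>T. x \<in> T \<and> openin X T \<and>
        (\<exists>v. \<Union>v = {e \<in> topspace E. p e \<in> T} \<and>
             (\<forall>u \<in> v. openin E u) \<and> pairwise disjnt v \<and>
             (\<forall>u \<in> v. homeomorphic_map (subtopology E u) (subtopology X T) p)))"

definition coverings_equivalent ::
  "'e1 topology \<Rightarrow> ('e1 \<Rightarrow> 'x) \<Rightarrow> 'e2 topology \<Rightarrow> ('e2 \<Rightarrow> 'x) \<Rightarrow> bool" where
  "coverings_equivalent E1 p1 E2 p2 \<longleftrightarrow>
     (\<exists>h. homeomorphic_map E1 E2 h \<and> (\<forall>e \<in> topspace E1. p2 (h e) = p1 e))"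

definition zero_locus_top :: "'x topology \<Rightarrow> ('x \<times> complex \<Rightarrow> complex) \<Rightarrow> ('x \<times> complex) topology" where
  "zero_locus_top X F = subtopology (prod_topology X euclidean)
      {(x, z). x \<in> topspace X \<and> F (x, z) = 0}"

definition weierstrass_entire_family :: "'x topology \<Rightarrow> ('x \<times> complex \<Rightarrow> complex) \<Rightarrow> bool" where
  "weierstrass_entire_family X F \<longleftrightarrow>
     continuous_map (prod_topology X euclidean) euclidean F \<and>
     (\<forall>x \<in> topspace X. (\<lambda>z. F (x, z)) holomorphic_on UNIV) \<and>
     covering_map_top (zero_locus_top X F) X fst \<and>
     (\<forall>x \<in> topspace X. countable {z. F (x, z) = 0} \<and> infinite {z. F (x, z) = 0})"

text \<open>The sphere S^n = unit sphere of a Euclidean space of dimension n+1.\<close>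
definition sphere_top :: "('a::euclidean_space) topology" where
  "sphere_top = top_of_set (sphere 0 1)"

text \<open>Real projective space: points are antipodal pairs {x,-x}, with the
  quotient topology from the sphere.\<close>
definition rp_proj :: "'a::euclidean_space \<Rightarrow> 'a set" where
  "rp_proj x = {x, -x}"

definition rp_top :: "('a::euclidean_space) set topology" where
  "rp_top = topology (\<lambda>U. U \<subseteq> rp_proj ` sphere 0 1 \<and>
        openin (top_of_set (sphere 0 1)) {x \<in> sphere 0 1. rp_proj x \<in> U})"

definition circle_top :: "complex topology" where
  "circle_top = top_of_set (sphere 0 1)"

end

theory Submission
  imports Defs
begin

text \<open>An equivalence h from the product covering to the zero locus of F embeds S^n \<times> \<real>
  fibrewise into the trivial bundle with fibre \<complex>, so g y = snd (h (y, 0)) is a continuous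
  map S^n \<rightarrow> \<complex> taking different values at antipodal points, which lie over the same point
  of \<real>P^n \<times> S^1. This contradicts the Borsuk--Ulam theorem for maps S^n \<rightarrow> \<complex>, n \<ge> 2,
  which follows from simple connectivity of the sphere: the odd map y \<mapsto> g y - g (-y) would
  have a continuous square root s, and s (-y) / s y is then a continuous map into {\<i>, -\<i>},
  hence a constant c; evaluating at -y as well gives c^2 = 1.\<close>

lemma odd_map_to_complex_has_zero:
  fixes f :: "'a::real_normed_vector \<Rightarrow> complex"
  assumes S: "simply_connected S" "locally path_connected S" and "S \<noteq> {}"
    and neg: "\<And>x. x \<in> S \<Longrightarrow> -x \<in> S"
    and contf: "continuous_on S f"
    and odd: "\<And>x. x \<in> S \<Longrightarrow> f (-x) = - f x"
  shows "\<exists>x\<in>S. f x = 0"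
proof (rule ccontr)
  assume "\<not> ?thesis"
  then have f_nz: "\<And>x. x \<in> S \<Longrightarrow> f x \<noteq> 0" by blast
  obtain s where conts: "continuous_on S s" and sq: "\<And>x. x \<in> S \<Longrightarrow> f x = (s x)\<^sup>2"
    using continuous_sqrt_on_simply_connected [OF contf S f_nz] by blast
  have s_nz: "s x \<noteq> 0" if "x \<in> S" for x
    using f_nz sq that by force
  define r where "r x = s (-x) / s x" for x
  have r_sq: "(r x)\<^sup>2 = -1" if "x \<in> S" for x
    using odd [OF that] sq [OF that] sq [OF neg [OF that]] s_nz [OF that]
    by (simp add: r_def power_divide)
  have r_range: "r ` S \<subseteq> {\<i>, -\<i>}"
    using r_sq by (auto simp: power2_eq_iff [of _ \<i>, simplified])
  have "continuous_on S (\<lambda>x. s (-x))"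
    by (rule continuous_on_compose2 [OF conts]) (auto intro: continuous_intros neg)
  then have "continuous_on S r"
    unfolding r_def using conts s_nz by (intro continuous_intros) auto
  then have "r constant_on S"
    using continuous_finite_range_constant [OF simply_connected_imp_connected [OF S(1)]]
      r_range finite_subset by blast
  then obtain c where c: "\<And>x. x \<in> S \<Longrightarrow> r x = c"
    by (auto simp: constant_on_def)
  obtain x where x: "x \<in> S" using \<open>S \<noteq> {}\<close> by blast
  have "r x * r (-x) = 1"
    using s_nz [OF x] s_nz [OF neg [OF x]] by (simp add: r_def)
  then have "c\<^sup>2 = 1"
    using c x neg by (simp add: power2_eq_square)
  with r_sq [OF x] c [OF x] show False by simp
qed

theorem Borsuk_Ulam_complex_sphere:
  fixes g :: "'a::euclidean_space \<Rightarrow> complex"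
  assumes "3 \<le> DIM('a)" "0 \<le> r" "continuous_on (sphere 0 r) g"
  shows "\<exists>y\<in>sphere 0 r. g y = g (-y)"
proof -
  have "continuous_on (sphere 0 r) (\<lambda>y. g (-y))"
    by (rule continuous_on_compose2 [OF assms(3)]) (auto intro: continuous_intros)
  then have "\<exists>y\<in>sphere 0 r. g y - g (-y) = 0"
    using assms
    by (intro odd_map_to_complex_has_zero simply_connected_sphere locally_path_connected_sphere)
       (auto intro: continuous_intros)
  then show ?thesis by simp
qed

lemma equal_neg_zero_real_vector: "x = - x \<longleftrightarrow> x = (0 :: 'a::real_vector)"
proof
  assume "x = - x"
  then have "2 *\<^sub>R x = 0"
    by (metis add.right_inverse scaleR_2)
  then show "x = 0" by simp
qed simp

lemma coverings_equivalent_zero_locus_fibrewise_injective: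
  assumes "coverings_equivalent E p (zero_locus_top X F) fst"
  obtains g :: "_ \<Rightarrow> complex" where "continuous_map E euclidean g"
    and "\<And>e e'. \<lbrakk>e \<in> topspace E; e' \<in> topspace E; p e = p e'; e \<noteq> e'\<rbrakk> \<Longrightarrow> g e \<noteq> g e'"
proof -
  obtain h where hom: "homeomorphic_map E (zero_locus_top X F) h"
    and fst_h: "\<And>e. e \<in> topspace E \<Longrightarrow> fst (h e) = p e"
    using assms unfolding coverings_equivalent_def by blast
  have "continuous_map E (prod_topology X euclidean) h"
    using homeomorphic_imp_continuous_map [OF hom] continuous_map_into_fulltopology
    unfolding zero_locus_top_def by blast
  then have "continuous_map E euclidean (snd \<circ> h)"
    using continuous_map_compose continuous_map_snd by blast
  moreover have "(snd \<circ> h) e \<noteq> (snd \<circ> h) e'"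
    if "e \<in> topspace E" "e' \<in> topspace E" "p e = p e'" "e \<noteq> e'" for e e'
  proof -
    have "h e \<noteq> h e'"
      using that inj_onD [OF homeomorphic_imp_injective_map [OF hom]] by blast
    moreover have "fst (h e) = fst (h e')"
      using that fst_h by simp
    ultimately show ?thesis
      by (simp add: prod_eq_iff)
  qed
  ultimately show thesis
    by (rule that)
qed

theorem mainTheorem15:
  assumes "DIM('a::euclidean_space) \<ge> 3"
  shows "\<not> (\<exists>F. weierstrass_entire_family (prod_topology (rp_top :: 'a set topology) circle_top) F \<and>
               coverings_equivalent
                 (prod_topology (sphere_top :: 'a topology) (euclideanreal))
                 (\<lambda>(x, \<theta>). (rp_proj x, exp (\<i> * complex_of_real \<theta>)))
                 (zero_locus_top (prod_topology rp_top circle_top) F) fst)"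
proof clarify
  fix F
  let ?E = "prod_topology (sphere_top :: 'a topology) euclideanreal"
  let ?p = "\<lambda>(x, \<theta>). (rp_proj x, exp (\<i> * complex_of_real \<theta>))"
  assume "coverings_equivalent ?E ?p (zero_locus_top (prod_topology rp_top circle_top) F) fst"
  then obtain g :: "'a \<times> real \<Rightarrow> complex" where contg: "continuous_map ?E euclidean g"
    and sep: "\<And>e e'. \<lbrakk>e \<in> topspace ?E; e' \<in> topspace ?E; ?p e = ?p e'; e \<noteq> e'\<rbrakk> \<Longrightarrow> g e \<noteq> g e'"
    by (rule coverings_equivalent_zero_locus_fibrewise_injective) (rule that)
  have "continuous_map (top_of_set (sphere 0 1)) ?E (\<lambda>y. (y, 0))"
    by (intro continuous_map_pairedI) (auto simp: sphere_top_def)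
  from continuous_map_compose [OF this contg]
  have cont_slice: "continuous_on (sphere 0 1) (\<lambda>y. g (y, 0))"
    by (simp add: o_def)
  obtain y :: 'a where y: "y \<in> sphere 0 1" and "g (y, 0) = g (-y, 0)"
    using Borsuk_Ulam_complex_sphere [OF assms zero_le_one cont_slice] by blast
  moreover have "y \<noteq> -y"
    using y by (auto simp: equal_neg_zero_real_vector)
  moreover have "rp_proj (-y) = rp_proj y"
    by (simp add: rp_proj_def insert_commute)
  ultimately show False
    using sep [of "(y, 0)" "(-y, 0)"] y by (simp add: sphere_top_def)
qed

end
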